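(* Let $G$ act by isometries on a $\delta$-hyperbolic geodesic space $X$, let $\alpha\ge3\delta$ and let $U\subset G$ be $\alpha$-reduced at $p\in X$. Then for every $w\in\mathbf F(U)$, $$2\alpha|w|_U\le|wp-p|\le L(U,p)\,|w|_U.$$ In particular the natural homomorphism $\mathbf F(U)\to G$ is injective.
   Context: Hyperbolicity: $(x,z)_t\ge\min\{(x,y)_t,(y,z)_t\}-\delta$ with $(x,y)_z=\frac12(|x-z|+|y-z|-|x-y|)$. $U\subset G$ finite is $\alpha$-reduced at $p$ if $U\cap U^{-1}=\varnothing$ and for distinct $u_1,u_2\in U\sqcup U^{-1}$, $(u_1p,u_2p)_p<\frac12\min\{|u_1p-p|,|u_2p-p|\}-\alpha-50\delta$. $\mathbf F(U)$ is the free group on $U$, $|w|_U$ its word length, and $wp$ means the image of $w$ in $G$ applied to $p$. $L(U,p)=\max_{u\in U}|up-p|$. *)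

theory Defs
  imports "HOL-Analysis.Analysis" "HOL-Algebra.Group"
begin

definition gromov :: "'x::metric_space \<Rightarrow> 'x \<Rightarrow> 'x \<Rightarrow> real" where
  "gromov x y z = (dist x z + dist y z - dist x y) / 2"

definition hyperbolic :: "real \<Rightarrow> 'x::metric_space itself \<Rightarrow> bool" where
  "hyperbolic \<delta> _ \<longleftrightarrow>
     (\<forall>x y z t :: 'x. gromov x z t \<ge> min (gromov x y t) (gromov y z t) - \<delta>)"

definition geodesic_space :: "'x::metric_space itself \<Rightarrow> bool" where
  "geodesic_space _ \<longleftrightarrow>
     (\<forall>x y :: 'x. \<exists>\<gamma> :: real \<Rightarrow> 'x. \<gamma> 0 = x \<and> \<gamma> (dist x y) = y \<and>
        (\<forall>s\<in>{0..dist x y}. \<forall>t\<in>{0..dist x y}. dist (\<gamma> s) (\<gamma> t) = \<bar>s - t\<bar>))"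

definition isometric_action ::
  "('g, 'b) monoid_scheme \<Rightarrow> ('g \<Rightarrow> 'x::metric_space \<Rightarrow> 'x) \<Rightarrow> bool" where
  "isometric_action G act \<longleftrightarrow> group G \<and>
     (\<forall>x. act \<one>\<^bsub>G\<^esub> x = x) \<and>
     (\<forall>g\<in>carrier G. \<forall>h\<in>carrier G. \<forall>x. act (g \<otimes>\<^bsub>G\<^esub> h) x = act g (act h x)) \<and>
     (\<forall>g\<in>carrier G. \<forall>x y. dist (act g x) (act g y) = dist x y)"

definition alpha_reduced ::
  "('g, 'b) monoid_scheme \<Rightarrow> ('g \<Rightarrow> 'x::metric_space \<Rightarrow> 'x) \<Rightarrow> real \<Rightarrow> real
     \<Rightarrow> 'g set \<Rightarrow> 'x \<Rightarrow> bool" where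
  "alpha_reduced G act \<delta> \<alpha> U p \<longleftrightarrow>
     finite U \<and> U \<subseteq> carrier G \<and> U \<inter> (\<lambda>u. inv\<^bsub>G\<^esub> u) ` U = {} \<and>
     (\<forall>u1\<in>U \<union> (\<lambda>u. inv\<^bsub>G\<^esub> u) ` U. \<forall>u2\<in>U \<union> (\<lambda>u. inv\<^bsub>G\<^esub> u) ` U. u1 \<noteq> u2 \<longrightarrow>
        gromov (act u1 p) (act u2 p) p
          < min (dist (act u1 p) p) (dist (act u2 p) p) / 2 - \<alpha> - 50 * \<delta>)"

text \<open>Elements of the free group F(U) are represented by reduced words over the
  formal letters u^{+1} = (u, True) and u^{-1} = (u, False), u in U.
  The word length |w|_U is the length of the reduced word.\<close>
definition reduced_word :: "'g set \<Rightarrow> ('g \<times> bool) list \<Rightarrow> bool" where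
  "reduced_word U w \<longleftrightarrow> fst ` set w \<subseteq> U \<and>
     (\<forall>i. Suc i < length w \<longrightarrow>
        \<not> (fst (w ! i) = fst (w ! Suc i) \<and> snd (w ! i) \<noteq> snd (w ! Suc i)))"

definition letter_val :: "('g, 'b) monoid_scheme \<Rightarrow> 'g \<times> bool \<Rightarrow> 'g" where
  "letter_val G l = (if snd l then fst l else inv\<^bsub>G\<^esub> (fst l))"

definition word_eval :: "('g, 'b) monoid_scheme \<Rightarrow> ('g \<times> bool) list \<Rightarrow> 'g" where
  "word_eval G w = foldr (\<lambda>l acc. letter_val G l \<otimes>\<^bsub>G\<^esub> acc) w \<one>\<^bsub>G\<^esub>"

definition Lmax :: "('g \<Rightarrow> 'x::metric_space \<Rightarrow> 'x) \<Rightarrow> 'g set \<Rightarrow> 'x \<Rightarrow> real" where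
  "Lmax act U p = Max ((\<lambda>u. dist (act u p) p) ` U)"

end

theory Submission
  imports Defs
begin

text \<open>Follow the orbit points of the prefixes of a reduced word. Inductively, each new point
  \<open>z\<close> has small Gromov product \<open>(p, z)\<^sub>t\<close> at the previous point \<open>t\<close>: the last letter
  makes a sharp turn at \<open>t\<close> relative to the letter before it (this is the reduction
  condition), while \<open>p\<close> lies on the far side of \<open>t\<close> by the induction hypothesis, so the
  four-point condition forces \<open>(p, z)\<^sub>t\<close> to stay small. Hence every letter moves the point
  at least \<open>2\<alpha>\<close> further away from \<open>p\<close>. The upper bound is the triangle inequality, and
  injectivity follows because a nonempty reduced word cannot fix \<open>p\<close>.\<close>

lemma gromov_nonneg: "gromov x y z \<ge> 0"
  unfolding gromov_def using dist_triangle[of x y z] by (simp add: dist_commute)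

lemma gromov_base_self: "gromov p z p = 0"
  unfolding gromov_def by (simp add: dist_commute)

lemma gromov_add_rotate: "gromov x y z + gromov y z x = dist x z"
  unfolding gromov_def by (simp add: dist_commute field_simps)

lemma dist_eq_via_gromov: "dist z p = dist t p + dist z t - 2 * gromov p z t"
  unfolding gromov_def by (simp add: dist_commute field_simps)

lemma hyperbolic_nonneg:
  assumes "hyperbolic \<delta> TYPE('x::metric_space)"
  shows "\<delta> \<ge> 0"
proof -
  have "gromov x x x \<ge> min (gromov x x x) (gromov x x x) - \<delta>" for x :: 'x
    using assms unfolding hyperbolic_def by blast
  then show ?thesis by (simp add: gromov_def)
qed

lemma hyperbolic_gromov_propagate:
  fixes a p t z :: "'x::metric_space"
  assumes hyp: "hyperbolic \<delta> TYPE('x)" and "c \<ge> 0"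
    and prev: "gromov p t a < dist a t / 2 - c"
    and turn: "gromov a z t < min (dist a t) (dist z t) / 2 - c - \<delta>"
  shows "gromov p z t < dist z t / 2 - c" and "dist z p > dist t p + 2 * c"
proof -
  have four_point: "gromov a z t \<ge> min (gromov a p t) (gromov p z t) - \<delta>"
    using hyp unfolding hyperbolic_def by blast
  have "gromov a p t > dist a t / 2 + c"
    using gromov_add_rotate[of a p t] prev by linarith
  have "\<not> gromov a p t \<le> gromov p z t"
  proof
    assume "gromov a p t \<le> gromov p z t"
    with four_point have "gromov a p t - \<delta> \<le> gromov a z t"
      by simp
    moreover have "min (dist a t) (dist z t) \<le> dist a t"
      by simp
    ultimately show False
      using \<open>gromov a p t > dist a t / 2 + c\<close> turn \<open>c \<ge> 0\<close> by linarith
  qed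
  then have "min (gromov a p t) (gromov p z t) = gromov p z t"
    by simp
  with four_point turn show "gromov p z t < dist z t / 2 - c"
    by linarith
  then show "dist z p > dist t p + 2 * c"
    using dist_eq_via_gromov[of z p t] by linarith
qed

definition letter_inv :: "'g \<times> bool \<Rightarrow> 'g \<times> bool" where
  "letter_inv l = (fst l, \<not> snd l)"

definition word_inv :: "('g \<times> bool) list \<Rightarrow> ('g \<times> bool) list" where
  "word_inv w = rev (map letter_inv w)"

lemma fst_letter_inv [simp]: "fst (letter_inv l) = fst l"
  by (simp add: letter_inv_def)

lemma fst_set_word_inv [simp]: "fst ` set (word_inv w) = fst ` set w"
  by (force simp: word_inv_def)

lemma letter_inv_neq [simp]: "l \<noteq> letter_inv l"
  by (simp add: letter_inv_def prod_eq_iff)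

lemma reduced_word_iff:
  "reduced_word U w \<longleftrightarrow> fst ` set w \<subseteq> U \<and> successively (\<lambda>l l'. l' \<noteq> letter_inv l) w"
proof -
  have "l' \<noteq> letter_inv l \<longleftrightarrow> \<not> (fst l = fst l' \<and> snd l \<noteq> snd l')" for l l' :: "'a \<times> bool"
    by (cases l; cases l') (auto simp: letter_inv_def)
  then show ?thesis
    unfolding reduced_word_def successively_conv_nth by auto
qed

lemma reduced_word_Cons: "reduced_word U (l # w) \<Longrightarrow> reduced_word U w"
  by (auto simp: reduced_word_iff successively_Cons)

lemma reduced_word_butlast: "reduced_word U (w @ [l]) \<Longrightarrow> reduced_word U w"
  by (auto simp: reduced_word_iff successively_append_iff)

lemma reduced_word_word_inv: "reduced_word U w \<Longrightarrow> reduced_word U (word_inv w)"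
  by (auto simp: reduced_word_iff word_inv_def successively_map letter_inv_def
      elim!: successively_mono)

lemma reduced_word_inv_append:
  assumes "reduced_word U (b # w2)" and "reduced_word U (a # w1)" and "a \<noteq> b"
  shows "reduced_word U (word_inv (b # w2) @ a # w1)"
proof -
  have "fst ` set (word_inv (b # w2) @ a # w1) \<subseteq> U"
    using assms(1,2) by (simp add: reduced_word_iff image_Un)
  moreover have "last (word_inv (b # w2)) = letter_inv b"
    by (simp add: word_inv_def)
  moreover have "a \<noteq> letter_inv (letter_inv b)"
    using assms(3) by (simp add: letter_inv_def)
  ultimately show ?thesis
    using reduced_word_word_inv[OF assms(1)] assms(2)
    by (simp add: reduced_word_iff successively_append_iff)
qed

lemma word_eval_Nil [simp]: "word_eval G [] = \<one>\<^bsub>G\<^esub>"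
  by (simp add: word_eval_def)

lemma word_eval_Cons: "word_eval G (l # w) = letter_val G l \<otimes>\<^bsub>G\<^esub> word_eval G w"
  by (simp add: word_eval_def)

context group
begin

lemma letter_val_closed: "fst l \<in> carrier G \<Longrightarrow> letter_val G l \<in> carrier G"
  by (simp add: letter_val_def)

lemma letter_val_letter_inv:
  "fst l \<in> carrier G \<Longrightarrow> letter_val G (letter_inv l) = inv (letter_val G l)"
  by (simp add: letter_val_def letter_inv_def)

lemma word_eval_closed: "fst ` set w \<subseteq> carrier G \<Longrightarrow> word_eval G w \<in> carrier G"
  by (induction w) (auto simp: word_eval_Cons letter_val_closed)

lemma word_eval_append:
  "fst ` set v \<subseteq> carrier G \<Longrightarrow> fst ` set w \<subseteq> carrier G \<Longrightarrow>
    word_eval G (v @ w) = word_eval G v \<otimes> word_eval G w"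
  by (induction v) (auto simp: word_eval_Cons word_eval_closed letter_val_closed m_assoc)

lemma word_eval_snoc:
  "fst ` set v \<subseteq> carrier G \<Longrightarrow> fst l \<in> carrier G \<Longrightarrow>
    word_eval G (v @ [l]) = word_eval G v \<otimes> letter_val G l"
  by (simp add: word_eval_append word_eval_Cons letter_val_closed)

lemma word_eval_word_inv:
  "fst ` set w \<subseteq> carrier G \<Longrightarrow> word_eval G (word_inv w) = inv (word_eval G w)"
proof (induction w)
  case Nil
  then show ?case by (simp add: word_inv_def)
next
  case (Cons l w)
  have "word_inv (l # w) = word_inv w @ [letter_inv l]"
    by (simp add: word_inv_def)
  with Cons have "word_eval G (word_inv (l # w)) = inv (word_eval G w) \<otimes> inv (letter_val G l)"
    by (simp add: word_eval_snoc letter_val_letter_inv)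
  with Cons.prems show ?case
    by (simp add: word_eval_Cons inv_mult_group word_eval_closed letter_val_closed)
qed

end

locale isometric_group_action = group G for G :: "('g, 'b) monoid_scheme" (structure) +
  fixes act :: "'g \<Rightarrow> 'x::metric_space \<Rightarrow> 'x"
  assumes act_one: "act \<one> x = x"
    and act_mult: "g \<in> carrier G \<Longrightarrow> h \<in> carrier G \<Longrightarrow> act (g \<otimes> h) x = act g (act h x)"
    and dist_act: "g \<in> carrier G \<Longrightarrow> dist (act g x) (act g y) = dist x y"
begin

lemma act_act_inv: "g \<in> carrier G \<Longrightarrow> act g (act (inv g) x) = x"
  by (simp add: act_mult[symmetric] act_one)

lemma dist_act_inv: "g \<in> carrier G \<Longrightarrow> dist (act (inv g) x) x = dist (act g x) x"
  by (metis act_act_inv dist_act dist_commute inv_closed)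

lemma gromov_act: "g \<in> carrier G \<Longrightarrow> gromov (act g x) (act g y) (act g z) = gromov x y z"
  by (simp add: gromov_def dist_act)

lemma dist_act_letter_val:
  "fst l \<in> carrier G \<Longrightarrow> dist (act (letter_val G l) x) x = dist (act (fst l) x) x"
  by (simp add: letter_val_def dist_act_inv)

lemma dist_act_word_eval_le:
  assumes "fst ` set w \<subseteq> carrier G" and "\<And>l. l \<in> set w \<Longrightarrow> dist (act (fst l) x) x \<le> L"
  shows "dist (act (word_eval G w) x) x \<le> L * length w"
  using assms
proof (induction w)
  case Nil
  then show ?case by (simp add: act_one)
next
  case (Cons l w)
  then have l: "fst l \<in> carrier G" and w: "word_eval G w \<in> carrier G"
    by (auto intro: word_eval_closed)
  have "dist (act (word_eval G (l # w)) x) x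
      \<le> dist (act (letter_val G l) (act (word_eval G w) x)) (act (letter_val G l) x)
        + dist (act (letter_val G l) x) x"
    by (simp add: word_eval_Cons act_mult l w letter_val_closed dist_triangle)
  also have "\<dots> = dist (act (word_eval G w) x) x + dist (act (fst l) x) x"
    by (simp add: dist_act l letter_val_closed dist_act_letter_val)
  also have "\<dots> \<le> L * length w + L"
    using Cons by (intro add_mono) auto
  finally show ?case by (simp add: algebra_simps)
qed

end

lemma isometric_group_actionI:
  "isometric_action G act \<Longrightarrow> isometric_group_action G act"
  unfolding isometric_action_def isometric_group_action_def isometric_group_action_axioms_def
  by blast

locale reduced_action = isometric_group_action G act
  for G :: "('g, 'b) monoid_scheme" (structure) and act :: "'g \<Rightarrow> 'x::metric_space \<Rightarrow> 'x" +
  fixes \<delta> \<alpha> :: real and U :: "'g set" and p :: 'x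
  assumes hyperbolic: "hyperbolic \<delta> TYPE('x)"
    and alpha_nonneg: "\<alpha> \<ge> 0"
    and alpha_reduced: "alpha_reduced G act \<delta> \<alpha> U p"
begin

abbreviation word_point :: "('g \<times> bool) list \<Rightarrow> 'x" where
  "word_point w \<equiv> act (word_eval G w) p"

lemma delta_nonneg: "\<delta> \<ge> 0"
  using hyperbolic by (rule hyperbolic_nonneg)

lemma U_carrier: "U \<subseteq> carrier G"
  using alpha_reduced by (simp add: alpha_reduced_def)

lemma gromov_reduced:
  assumes "u \<in> U \<union> (\<lambda>u. inv u) ` U" and "u' \<in> U \<union> (\<lambda>u. inv u) ` U" and "u \<noteq> u'"
  shows "gromov (act u p) (act u' p) p < min (dist (act u p) p) (dist (act u' p) p) / 2 - \<alpha> - 50 * \<delta>"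
proof -
  from alpha_reduced have "\<forall>u1\<in>U \<union> (\<lambda>u. inv u) ` U. \<forall>u2\<in>U \<union> (\<lambda>u. inv u) ` U. u1 \<noteq> u2 \<longrightarrow>
      gromov (act u1 p) (act u2 p) p < min (dist (act u1 p) p) (dist (act u2 p) p) / 2 - \<alpha> - 50 * \<delta>"
    unfolding alpha_reduced_def by (elim conjE)
  with assms show ?thesis
    by (elim ballE) auto
qed

lemma reduced_word_carrier: "reduced_word U w \<Longrightarrow> fst ` set w \<subseteq> carrier G"
  using U_carrier by (auto simp: reduced_word_def)

lemma letter_val_inj:
  assumes "fst l \<in> U" and "fst l' \<in> U" and "letter_val G l = letter_val G l'"
  shows "l = l'"
proof (cases l; cases l')
  fix x s y t
  assume l: "l = (x, s)" and l': "l' = (y, t)"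
  have x: "x \<in> U" and y: "y \<in> U"
    using assms(1,2) l l' by simp_all
  moreover have "U \<inter> (\<lambda>u. inv u) ` U = {}"
    using alpha_reduced by (simp add: alpha_reduced_def)
  ultimately have not_inv: "x \<noteq> inv y" "y \<noteq> inv x"
    by blast+
  have inv_inj: "inv x = inv y \<Longrightarrow> x = y"
    using x y U_carrier by (metis inv_inv subsetD)
  show ?thesis
    using assms(3) not_inv unfolding l l' letter_val_def
    by (cases s; cases t) (auto dest: inv_inj)
qed

lemma gromov_letter_val_lt:
  assumes "fst l \<in> U" and "fst l' \<in> U" and "l \<noteq> l'"
  shows "gromov (act (letter_val G l) p) (act (letter_val G l') p) p
    < min (dist (act (fst l) p) p) (dist (act (fst l') p) p) / 2 - \<alpha> - 50 * \<delta>"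
proof -
  have letters: "letter_val G k \<in> U \<union> (\<lambda>u. inv u) ` U" if "fst k \<in> U" for k :: "'g \<times> bool"
    using that by (simp add: letter_val_def)
  have "letter_val G l \<noteq> letter_val G l'"
    using letter_val_inj[OF assms(1,2)] assms(3) by metis
  with letters[OF assms(1)] letters[OF assms(2)]
  have "gromov (act (letter_val G l) p) (act (letter_val G l') p) p
      < min (dist (act (letter_val G l) p) p) (dist (act (letter_val G l') p) p) / 2 - \<alpha> - 50 * \<delta>"
    by (rule gromov_reduced)
  moreover have "fst l \<in> carrier G" "fst l' \<in> carrier G"
    using assms(1,2) U_carrier by auto
  ultimately show ?thesis
    by (simp add: dist_act_letter_val)
qed

lemma dist_act_letter_gt:
  fixes l :: "'g \<times> bool"
  assumes "fst l \<in> U"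
  shows "dist (act (fst l) p) p > 2 * \<alpha> + 100 * \<delta>"
proof -
  have "letter_val G (letter_inv l) = inv (letter_val G l)"
    using assms U_carrier by (auto intro: letter_val_letter_inv)
  then have "gromov (act (letter_val G l) p) (act (inv (letter_val G l)) p) p
      < dist (act (fst l) p) p / 2 - \<alpha> - 50 * \<delta>"
    using gromov_letter_val_lt[of l "letter_inv l"] assms by simp
  then show ?thesis
    using gromov_nonneg[of "act (letter_val G l) p" "act (inv (letter_val G l)) p" p] by linarith
qed

text \<open>The step of the induction along a reduced word: \<open>h\<close> evaluates the prefix before the
  letters \<open>r s\<close>, so \<open>a = h p\<close>, \<open>t = h r p\<close> and \<open>z = h r s p\<close> are three consecutive orbit points.
  Moved back by \<open>(h r)\<^sup>-\<^sup>1\<close>, the Gromov product \<open>(a, z)\<^sub>t\<close> becomes \<open>(r\<^sup>-\<^sup>1 p, s p)\<^sub>p\<close>, which is small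
  by the reduction condition.\<close>
lemma gromov_letter_step:
  assumes r: "fst r \<in> U" and s: "fst s \<in> U" and "s \<noteq> letter_inv r" and h: "h \<in> carrier G"
    and prev: "gromov p (act h (act (letter_val G r) p)) (act h p)
                 < dist (act (fst r) p) p / 2 - \<alpha> - 49 * \<delta>"
  defines "t \<equiv> act h (act (letter_val G r) p)"
    and "z \<equiv> act h (act (letter_val G r) (act (letter_val G s) p))"
  shows "gromov p z t < dist (act (fst s) p) p / 2 - \<alpha> - 49 * \<delta>"
    and "dist z p > dist t p + 2 * \<alpha>"
proof -
  define g k a where "g = letter_val G r" and "k = letter_val G s" and "a = act h p"
  have carrier: "fst r \<in> carrier G" "fst s \<in> carrier G" "g \<in> carrier G" "k \<in> carrier G"
    using r s U_carrier by (auto simp: g_def k_def letter_val_closed)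
  have a: "a = act h (act g (act (inv g) p))"
    by (simp add: a_def act_act_inv carrier)
  have dist_at: "dist a t = dist (act (fst r) p) p"
    using dist_act_letter_val[of r p] by (simp add: a_def t_def dist_act h dist_commute carrier)
  have dist_zt: "dist z t = dist (act (fst s) p) p"
    by (simp add: z_def t_def dist_act h carrier flip: g_def k_def dist_act_letter_val)
  have "gromov a z t = gromov (act (inv g) p) (act k p) p"
    by (simp add: a z_def t_def gromov_act h carrier flip: g_def k_def)
  also have "\<dots> = gromov (act (letter_val G (letter_inv r)) p) (act k p) p"
    by (simp add: g_def letter_val_letter_inv carrier)
  also have "\<dots> < min (dist a t) (dist z t) / 2 - (\<alpha> + 49 * \<delta>) - \<delta>"
    using gromov_letter_val_lt[of "letter_inv r" s] r s \<open>s \<noteq> letter_inv r\<close>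
    by (simp add: k_def dist_at dist_zt)
  finally have turn: "gromov a z t < min (dist a t) (dist z t) / 2 - (\<alpha> + 49 * \<delta>) - \<delta>" .
  have "gromov p t a < dist a t / 2 - (\<alpha> + 49 * \<delta>)"
    using prev dist_at by (simp add: a_def t_def)
  moreover have "\<alpha> + 49 * \<delta> \<ge> 0"
    using alpha_nonneg delta_nonneg by simp
  ultimately have "gromov p z t < dist z t / 2 - (\<alpha> + 49 * \<delta>)"
    and "dist z p > dist t p + 2 * (\<alpha> + 49 * \<delta>)"
    using hyperbolic_gromov_propagate[OF hyperbolic _ _ turn] by blast+
  then show "gromov p z t < dist (act (fst s) p) p / 2 - \<alpha> - 49 * \<delta>"
    and "dist z p > dist t p + 2 * \<alpha>"
    using dist_zt delta_nonneg by simp_all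
qed

lemma reduced_word_snoc_estimate:
  assumes "reduced_word U (v @ [s])"
  shows "gromov p (word_point (v @ [s])) (word_point v)
           < dist (act (fst s) p) p / 2 - \<alpha> - 49 * \<delta>
         \<and> dist (word_point (v @ [s])) p > 2 * \<alpha> * length (v @ [s])"
  using assms
proof (induction v arbitrary: s rule: rev_induct)
  case Nil
  then have s: "fst s \<in> U" and "fst s \<in> carrier G"
    using U_carrier by (auto simp: reduced_word_def)
  then have "dist (word_point [s]) p = dist (act (fst s) p) p"
    by (simp add: word_eval_Cons letter_val_closed dist_act_letter_val)
  then show ?case
    using dist_act_letter_gt[OF s] delta_nonneg by (simp add: act_one gromov_base_self)
next
  case (snoc r v)
  then have red: "reduced_word U (v @ [r])" and "s \<noteq> letter_inv r"
    and letters: "fst ` set v \<subseteq> carrier G" "fst r \<in> U" "fst s \<in> U"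
    using reduced_word_butlast[of U "v @ [r]" s] U_carrier
    by (auto simp: reduced_word_iff successively_append_iff)
  define h where "h = word_eval G v"
  have carrier: "h \<in> carrier G" "fst r \<in> carrier G" "fst s \<in> carrier G"
    using letters U_carrier by (auto simp: h_def word_eval_closed)
  have t: "word_point (v @ [r]) = act h (act (letter_val G r) p)"
    using letters carrier by (simp add: h_def word_eval_snoc act_mult letter_val_closed)
  have z: "word_point (v @ [r, s]) = act h (act (letter_val G r) (act (letter_val G s) p))"
    using word_eval_snoc[of "v @ [r]" s] letters carrier
    by (simp add: h_def word_eval_snoc act_mult letter_val_closed)
  have "gromov p (act h (act (letter_val G r) p)) (act h p)
      < dist (act (fst r) p) p / 2 - \<alpha> - 49 * \<delta>"
    using snoc.IH[OF red] t by (simp add: h_def)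
  note step = gromov_letter_step[OF \<open>fst r \<in> U\<close> \<open>fst s \<in> U\<close> \<open>s \<noteq> letter_inv r\<close> carrier(1) this]
  show ?case
    using step snoc.IH[OF red] by (simp add: t z distrib_left)
qed

lemma reduced_word_dist_gt:
  assumes "reduced_word U w" and "w \<noteq> []"
  shows "dist (word_point w) p > 2 * \<alpha> * length w"
  using reduced_word_snoc_estimate[of "butlast w" "last w"] assms by simp

lemma reduced_word_eval_neq_one:
  assumes "reduced_word U w" and "w \<noteq> []"
  shows "word_eval G w \<noteq> \<one>"
proof
  assume "word_eval G w = \<one>"
  then have "dist (word_point w) p = 0"
    by (simp add: act_one)
  moreover have "2 * \<alpha> * length w \<ge> 0"
    using alpha_nonneg by simp
  ultimately show False
    using reduced_word_dist_gt[OF assms] by linarith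
qed

lemma reduced_word_eval_inj:
  "reduced_word U w1 \<Longrightarrow> reduced_word U w2 \<Longrightarrow> word_eval G w1 = word_eval G w2 \<Longrightarrow> w1 = w2"
proof (induction w1 arbitrary: w2)
  case Nil
  then have "word_eval G w2 = \<one>"
    by simp
  with Nil.prems(2) show ?case
    using reduced_word_eval_neq_one by blast
next
  case (Cons a w1)
  note IH = Cons.IH and red1 = Cons.prems(1) and red2 = Cons.prems(2) and eq = Cons.prems(3)
  show ?case
  proof (cases w2)
    case Nil
    with eq have "word_eval G (a # w1) = \<one>"
      by simp
    with red1 show ?thesis
      using reduced_word_eval_neq_one by blast
  next
    case (Cons b w2')
    from red1 red2 Cons have c1: "fst ` set (a # w1) \<subseteq> carrier G"
      and c2: "fst ` set (b # w2') \<subseteq> carrier G"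
      using reduced_word_carrier by blast+
    show ?thesis
    proof (cases "a = b")
      case True
      have closed: "letter_val G b \<in> carrier G" "word_eval G w1 \<in> carrier G"
        "word_eval G w2' \<in> carrier G"
        using c1 c2 by (auto intro: letter_val_closed word_eval_closed)
      from eq have "letter_val G b \<otimes> word_eval G w1 = letter_val G b \<otimes> word_eval G w2'"
        unfolding Cons True word_eval_Cons .
      with closed have "word_eval G w1 = word_eval G w2'"
        by simp
      moreover have "reduced_word U w1" "reduced_word U w2'"
        using red1 red2 Cons by (auto dest: reduced_word_Cons)
      ultimately show ?thesis
        using IH True Cons by blast
    next
      case False
      have "word_eval G (word_inv (b # w2') @ a # w1)
          = inv (word_eval G (b # w2')) \<otimes> word_eval G (a # w1)"
        using c1 c2 by (simp only: word_eval_append word_eval_word_inv fst_set_word_inv)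
      also have "\<dots> = \<one>"
        using eq Cons word_eval_closed[OF c1] by simp
      finally have "word_eval G (word_inv (b # w2') @ a # w1) = \<one>" .
      moreover have "reduced_word U (word_inv (b # w2') @ a # w1)"
        using reduced_word_inv_append red1 red2 Cons False by blast
      ultimately show ?thesis
        using reduced_word_eval_neq_one by blast
    qed
  qed
qed

lemma reduced_word_dist_le:
  assumes "reduced_word U w"
  shows "dist (word_point w) p \<le> Lmax act U p * length w"
proof (rule dist_act_word_eval_le)
  show "fst ` set w \<subseteq> carrier G"
    using assms by (rule reduced_word_carrier)
  have "finite U"
    using alpha_reduced by (simp add: alpha_reduced_def)
  then show "dist (act (fst l) p) p \<le> Lmax act U p" if "l \<in> set w" for l
    using that assms unfolding Lmax_def reduced_word_def by (intro Max_ge) auto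
qed

end

theorem mainTheorem10:
  fixes G :: "('g, 'b) monoid_scheme"
    and act :: "'g \<Rightarrow> 'x::metric_space \<Rightarrow> 'x"
    and \<delta> \<alpha> :: real and U :: "'g set" and p :: 'x
  assumes "isometric_action G act"
    and "hyperbolic \<delta> TYPE('x)"
    and "geodesic_space TYPE('x)"
    and "\<alpha> \<ge> 3 * \<delta>"
    and "alpha_reduced G act \<delta> \<alpha> U p"
  shows "(\<forall>w. reduced_word U w \<longrightarrow>
            2 * \<alpha> * real (length w) \<le> dist (act (word_eval G w) p) p \<and>
            dist (act (word_eval G w) p) p \<le> Lmax act U p * real (length w))
       \<and> (\<forall>w1 w2. reduced_word U w1 \<and> reduced_word U w2 \<and>
                   word_eval G w1 = word_eval G w2 \<longrightarrow> w1 = w2)"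
proof -
  have "\<alpha> \<ge> 0"
    using hyperbolic_nonneg[OF assms(2)] assms(4) by linarith
  then interpret reduced_action G act \<delta> \<alpha> U p
    using assms isometric_group_actionI by (simp add: reduced_action_def reduced_action_axioms_def)
  have "2 * \<alpha> * length w \<le> dist (act (word_eval G w) p) p" if "reduced_word U w" for w
    using reduced_word_dist_gt[OF that] by (cases "w = []") auto
  then show ?thesis
    using reduced_word_dist_le reduced_word_eval_inj by blast
qed

end
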